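(* Let $\Gamma$ be a finite graph. The graph obtained from $\Gamma$ by repeatedly performing twin reductions (in any order) until no pair of twins remains is unique up to isomorphism, independent of the chosen sequence of reductions.
   Context: Graphs are simple (no loops). Two distinct vertices $v,w$ are open twins if they have the same open neighbourhoods (sets of adjacent vertices), and closed twins if they have the same closed neighbourhoods (neighbourhood together with the vertex itself); they are twins if they are open or closed twins. A twin reduction step takes a pair of twins $v,w$ and merges them into a single vertex, i.e. deletes one of them. A graph is twin-free if it has no pair of twins. The resulting twin-free graph is called the cokernel of $\Gamma$. *)

theory Defs
  imports Main
begin

text \<open>Subgraphs arising by deleting vertices are
  the induced subgraphs on subsets S of V, i.e. (S, E restricted to S).\<close>

definition simple_graph :: "'a set \<Rightarrow> ('a \<Rightarrow> 'a \<Rightarrow> bool) \<Rightarrow> bool" where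
  "simple_graph V E \<longleftrightarrow> finite V \<and> (\<forall>x\<in>V. \<forall>y\<in>V. E x y \<longleftrightarrow> E y x) \<and> (\<forall>x\<in>V. \<not> E x x)"

definition open_nbhd :: "'a set \<Rightarrow> ('a \<Rightarrow> 'a \<Rightarrow> bool) \<Rightarrow> 'a \<Rightarrow> 'a set" where
  "open_nbhd V E v = {u \<in> V. E v u}"

definition closed_nbhd :: "'a set \<Rightarrow> ('a \<Rightarrow> 'a \<Rightarrow> bool) \<Rightarrow> 'a \<Rightarrow> 'a set" where
  "closed_nbhd V E v = insert v (open_nbhd V E v)"

definition open_twins :: "'a set \<Rightarrow> ('a \<Rightarrow> 'a \<Rightarrow> bool) \<Rightarrow> 'a \<Rightarrow> 'a \<Rightarrow> bool" where
  "open_twins V E v w \<longleftrightarrow> v \<in> V \<and> w \<in> V \<and> v \<noteq> w \<and> open_nbhd V E v = open_nbhd V E w"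

definition closed_twins :: "'a set \<Rightarrow> ('a \<Rightarrow> 'a \<Rightarrow> bool) \<Rightarrow> 'a \<Rightarrow> 'a \<Rightarrow> bool" where
  "closed_twins V E v w \<longleftrightarrow> v \<in> V \<and> w \<in> V \<and> v \<noteq> w \<and> closed_nbhd V E v = closed_nbhd V E w"

definition twins :: "'a set \<Rightarrow> ('a \<Rightarrow> 'a \<Rightarrow> bool) \<Rightarrow> 'a \<Rightarrow> 'a \<Rightarrow> bool" where
  "twins V E v w \<longleftrightarrow> open_twins V E v w \<or> closed_twins V E v w"

definition twin_free :: "'a set \<Rightarrow> ('a \<Rightarrow> 'a \<Rightarrow> bool) \<Rightarrow> bool" where
  "twin_free V E \<longleftrightarrow> \<not> (\<exists>v w. twins V E v w)"

definition twin_reduction_step :: "('a \<Rightarrow> 'a \<Rightarrow> bool) \<Rightarrow> 'a set \<Rightarrow> 'a set \<Rightarrow> bool" where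
  "twin_reduction_step E V V' \<longleftrightarrow> (\<exists>v w. twins V E v w \<and> V' = V - {w})"

definition twin_reduces :: "('a \<Rightarrow> 'a \<Rightarrow> bool) \<Rightarrow> 'a set \<Rightarrow> 'a set \<Rightarrow> bool" where
  "twin_reduces E = (twin_reduction_step E)\<^sup>*\<^sup>*"

definition graph_iso :: "'a set \<Rightarrow> ('a \<Rightarrow> 'a \<Rightarrow> bool) \<Rightarrow> 'a set \<Rightarrow> ('a \<Rightarrow> 'a \<Rightarrow> bool) \<Rightarrow> bool" where
  "graph_iso V1 E1 V2 E2 \<longleftrightarrow>
     (\<exists>f. bij_betw f V1 V2 \<and> (\<forall>x\<in>V1. \<forall>y\<in>V1. E1 x y \<longleftrightarrow> E2 (f x) (f y)))"

end

theory Submission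
  imports Defs "HOL-Combinatorics.Transposition"
begin

text \<open>Twin reduction is locally confluent up to isomorphism. Suppose the vertices w and w'
  can both be deleted. If w and w' are twins of each other, the transposition of w and w'
  is an automorphism mapping the graph without w' onto the graph without w, so it transports
  reductions of one to reductions of the other. Otherwise deleting a vertex outside a pair of
  twins leaves them twins, so after deleting w one may still delete w' and vice versa. As in
  Newman's lemma, induction on the number of vertices turns local into global confluence.\<close>

lemma twins_sym: "twins V E a b \<Longrightarrow> twins V E b a"
  unfolding twins_def open_twins_def closed_twins_def by auto

lemma twinsD: "twins V E a b \<Longrightarrow> a \<in> V \<and> b \<in> V \<and> a \<noteq> b"
  unfolding twins_def open_twins_def closed_twins_def by auto

lemma simple_graph_subset: "simple_graph V E \<Longrightarrow> U \<subseteq> V \<Longrightarrow> simple_graph U E"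
  unfolding simple_graph_def by (auto intro: finite_subset)

lemma card_Diff_twin_less: "finite V \<Longrightarrow> twins V E v w \<Longrightarrow> card (V - {w}) < card V"
  using twinsD by (metis card_Diff1_less)

lemma twins_Diff:
  assumes "twins V E a b" "u \<noteq> a" "u \<noteq> b"
  shows "twins (V - {u}) E a b"
proof -
  have "open_nbhd (V - {u}) E x = open_nbhd V E x - {u}" for x
    unfolding open_nbhd_def by auto
  moreover have "closed_nbhd (V - {u}) E x = closed_nbhd V E x - {u}" if "x \<noteq> u" for x
    using that unfolding closed_nbhd_def open_nbhd_def by auto
  ultimately show ?thesis
    using assms unfolding twins_def open_twins_def closed_twins_def by auto
qed

lemma twin_reduces_subset: "twin_reduces E V U \<Longrightarrow> U \<subseteq> V"
  unfolding twin_reduces_def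
  by (induction rule: rtranclp_induct) (auto simp: twin_reduction_step_def)

lemma twin_reduces_Diff:
  "twins V E v w \<Longrightarrow> twin_reduces E (V - {w}) U \<Longrightarrow> twin_reduces E V U"
  unfolding twin_reduces_def twin_reduction_step_def by (blast intro: converse_rtranclp_into_rtranclp)

lemma twin_reduces_cases:
  assumes "twin_reduces E V U" "U \<noteq> V"
  obtains v w where "twins V E v w" "twin_reduces E (V - {w}) U"
proof -
  obtain X where "twin_reduction_step E V X" "twin_reduces E X U"
    using assms unfolding twin_reduces_def by (blast elim: converse_rtranclpE)
  then show ?thesis
    using that unfolding twin_reduction_step_def by blast
qed

lemma twin_reduces_from_twin_free: "twin_free V E \<Longrightarrow> twin_reduces E V U \<Longrightarrow> U = V"
  unfolding twin_free_def by (blast elim: twin_reduces_cases)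

lemma ex_twin_free_reduct: "finite V \<Longrightarrow> \<exists>U. twin_reduces E V U \<and> twin_free U E"
proof (induction "card V" arbitrary: V rule: less_induct)
  case less
  show ?case
  proof (cases "twin_free V E")
    case True
    then show ?thesis unfolding twin_reduces_def by blast
  next
    case False
    then obtain v w where twins: "twins V E v w" unfolding twin_free_def by blast
    have "card (V - {w}) < card V"
      using less.prems twins by (rule card_Diff_twin_less)
    then obtain U where "twin_reduces E (V - {w}) U" "twin_free U E"
      using less by blast
    then show ?thesis
      using twin_reduces_Diff[OF twins] by blast
  qed
qed

lemma graph_iso_refl: "graph_iso V E V E"
  unfolding graph_iso_def by (rule exI[of _ id]) auto

lemma graph_iso_sym:
  assumes "graph_iso A E B F"
  shows "graph_iso B F A E"
proof -
  obtain f where f: "bij_betw f A B" and edges: "\<forall>x\<in>A. \<forall>y\<in>A. E x y \<longleftrightarrow> F (f x) (f y)"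
    using assms unfolding graph_iso_def by blast
  have "bij_betw (inv_into A f) B A"
    using f by (rule bij_betw_inv_into)
  moreover have "F x y \<longleftrightarrow> E (inv_into A f x) (inv_into A f y)" if "x \<in> B" "y \<in> B" for x y
    using that f edges by (metis bij_betw_imp_surj_on f_inv_into_f inv_into_into)
  ultimately show ?thesis
    unfolding graph_iso_def by blast
qed

lemma graph_iso_trans [trans]:
  assumes "graph_iso A E B F" "graph_iso B F C G"
  shows "graph_iso A E C G"
proof -
  obtain f where f: "bij_betw f A B" "\<forall>x\<in>A. \<forall>y\<in>A. E x y \<longleftrightarrow> F (f x) (f y)"
    using assms(1) unfolding graph_iso_def by blast
  obtain g where g: "bij_betw g B C" "\<forall>x\<in>B. \<forall>y\<in>B. F x y \<longleftrightarrow> G (g x) (g y)"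
    using assms(2) unfolding graph_iso_def by blast
  have "bij_betw (g \<circ> f) A C"
    using f(1) g(1) by (rule bij_betw_trans)
  moreover have "\<forall>x\<in>A. \<forall>y\<in>A. E x y \<longleftrightarrow> G ((g \<circ> f) x) ((g \<circ> f) y)"
    using f g bij_betwE[OF f(1)] by simp
  ultimately show ?thesis
    unfolding graph_iso_def by blast
qed

locale induced_embedding =
  fixes V :: "'a set" and E :: "'a \<Rightarrow> 'a \<Rightarrow> bool" and f :: "'a \<Rightarrow> 'a"
  assumes inj: "inj_on f V"
    and edge_iff: "x \<in> V \<Longrightarrow> y \<in> V \<Longrightarrow> E (f x) (f y) \<longleftrightarrow> E x y"
begin

lemma open_nbhd_image:
  "U \<subseteq> V \<Longrightarrow> a \<in> U \<Longrightarrow> open_nbhd (f ` U) E (f a) = f ` open_nbhd U E a"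
  unfolding open_nbhd_def using edge_iff by (auto simp: subset_iff)

lemma closed_nbhd_image:
  "U \<subseteq> V \<Longrightarrow> a \<in> U \<Longrightarrow> closed_nbhd (f ` U) E (f a) = f ` closed_nbhd U E a"
  unfolding closed_nbhd_def by (simp add: open_nbhd_image)

lemma twins_image_iff:
  assumes "U \<subseteq> V" "a \<in> U" "b \<in> U"
  shows "twins (f ` U) E (f a) (f b) \<longleftrightarrow> twins U E a b"
proof -
  have nbhds_subset: "open_nbhd U E x \<subseteq> V" "closed_nbhd U E x \<subseteq> V" if "x \<in> U" for x
    using that assms(1) unfolding closed_nbhd_def open_nbhd_def by auto
  have "f a = f b \<longleftrightarrow> a = b"
    using assms inj by (meson inj_on_eq_iff subsetD)
  moreover have "open_nbhd (f ` U) E (f a) = open_nbhd (f ` U) E (f b)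
      \<longleftrightarrow> open_nbhd U E a = open_nbhd U E b"
    using assms nbhds_subset by (simp add: open_nbhd_image inj_on_image_eq_iff[OF inj])
  moreover have "closed_nbhd (f ` U) E (f a) = closed_nbhd (f ` U) E (f b)
      \<longleftrightarrow> closed_nbhd U E a = closed_nbhd U E b"
    using assms nbhds_subset by (simp add: closed_nbhd_image inj_on_image_eq_iff[OF inj])
  ultimately show ?thesis
    using assms unfolding twins_def open_twins_def closed_twins_def by auto
qed

lemma twin_reduction_step_image:
  assumes "U \<subseteq> V" "twin_reduction_step E U U'"
  shows "twin_reduction_step E (f ` U) (f ` U')"
proof -
  obtain a b where twins: "twins U E a b" and U': "U' = U - {b}"
    using assms(2) unfolding twin_reduction_step_def by blast
  have "a \<in> U" "b \<in> U"
    using twinsD[OF twins] by auto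
  then have "twins (f ` U) E (f a) (f b)"
    using assms(1) twins twins_image_iff by blast
  moreover have "f ` U' = f ` U - {f b}"
    using U' assms(1) \<open>b \<in> U\<close> inj_on_image_set_diff[OF inj, of U "{b}"] by auto
  ultimately show ?thesis
    unfolding twin_reduction_step_def by blast
qed

lemma twin_reduces_image:
  assumes "twin_reduces E U U'" "U \<subseteq> V"
  shows "twin_reduces E (f ` U) (f ` U')"
  using assms(1) unfolding twin_reduces_def
proof (induction rule: rtranclp_induct)
  case base
  then show ?case by simp
next
  case (step U' U'')
  have "U' \<subseteq> V"
    using step.hyps(1) assms(2) twin_reduces_subset[of E U U'] unfolding twin_reduces_def by blast
  then have "twin_reduction_step E (f ` U') (f ` U'')"
    using step.hyps(2) by (rule twin_reduction_step_image)
  with step.IH show ?case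
    by (rule rtranclp.rtrancl_into_rtrancl)
qed

lemma twin_free_image:
  assumes "U \<subseteq> V" "twin_free U E"
  shows "twin_free (f ` U) E"
  unfolding twin_free_def
proof (intro notI, elim exE)
  fix x y assume twins: "twins (f ` U) E x y"
  then obtain a b where "a \<in> U" "b \<in> U" "x = f a" "y = f b"
    using twinsD[OF twins] by blast
  with twins show False
    using assms twins_image_iff unfolding twin_free_def by blast
qed

lemma graph_iso_image: "U \<subseteq> V \<Longrightarrow> graph_iso U E (f ` U) E"
  unfolding graph_iso_def bij_betw_def
  using inj edge_iff by (blast intro: inj_on_subset)

end

lemma induced_embedding_transpose_twins:
  assumes "simple_graph V E" "twins V E w w'"
  shows "induced_embedding V E (transpose w w')"
proof
  have sym: "E x y \<longleftrightarrow> E y x" if "x \<in> V" "y \<in> V" for x y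
    using assms(1) that unfolding simple_graph_def by blast
  have irrefl: "\<not> E x x" if "x \<in> V" for x
    using assms(1) that unfolding simple_graph_def by blast
  have ww': "w \<in> V" "w' \<in> V" "w \<noteq> w'"
    using twinsD[OF assms(2)] by auto
  have nbhd: "E w y \<longleftrightarrow> E w' y" if "y \<in> V" "y \<noteq> w" "y \<noteq> w'" for y
  proof -
    have "open_nbhd V E w = open_nbhd V E w' \<or> closed_nbhd V E w = closed_nbhd V E w'"
      using assms(2) unfolding twins_def open_twins_def closed_twins_def by blast
    then show ?thesis
      using that unfolding closed_nbhd_def open_nbhd_def by blast
  qed
  have nbhd': "E y w \<longleftrightarrow> E y w'" if "y \<in> V" "y \<noteq> w" "y \<noteq> w'" for y
    using nbhd[OF that] sym[OF that(1) ww'(1)] sym[OF that(1) ww'(2)] by blast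
  have "E w w' \<longleftrightarrow> E w' w"
    using sym ww' by blast
  moreover fix x y assume "x \<in> V" "y \<in> V"
  ultimately show "E (transpose w w' x) (transpose w w' y) \<longleftrightarrow> E x y"
    using ww' nbhd nbhd' irrefl
    by (cases "x = w"; cases "x = w'"; cases "y = w"; cases "y = w'") auto
qed simp

lemma twin_free_reduct_transfer:
  assumes "simple_graph V E" "twins V E w w'"
    and "twin_reduces E (V - {w'}) U" "twin_free U E"
  obtains U' where "twin_reduces E (V - {w}) U'" "twin_free U' E" "graph_iso U' E U E"
proof -
  interpret induced_embedding V E "transpose w w'"
    using assms(1,2) by (rule induced_embedding_transpose_twins)
  have "w \<in> V" "w' \<in> V" "w \<noteq> w'"
    using twinsD[OF assms(2)] by auto
  then have image: "transpose w w' ` (V - {w'}) = V - {w}"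
    by (simp add: image_set_diff inj_transpose)
  have "U \<subseteq> V"
    using twin_reduces_subset[OF assms(3)] by blast
  have "twin_reduces E (transpose w w' ` (V - {w'})) (transpose w w' ` U)"
    using assms(3) by (rule twin_reduces_image) blast
  moreover have "twin_free (transpose w w' ` U) E"
    using \<open>U \<subseteq> V\<close> assms(4) by (rule twin_free_image)
  moreover have "graph_iso (transpose w w' ` U) E U E"
    using graph_iso_image[OF \<open>U \<subseteq> V\<close>] by (rule graph_iso_sym)
  ultimately show ?thesis
    using that image by simp
qed

lemma twin_reductions_join:
  assumes "simple_graph V E" "twins V E v w" "twins V E v' w'"
  obtains U U' where "twin_reduces E (V - {w}) U" "twin_free U E"
    "twin_reduces E (V - {w'}) U'" "twin_free U' E" "graph_iso U E U' E"
proof -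
  have "finite V"
    using assms(1) unfolding simple_graph_def by blast
  have reduct: "\<exists>U. twin_reduces E X U \<and> twin_free U E" if "X \<subseteq> V" for X
    using finite_subset[OF that \<open>finite V\<close>] by (rule ex_twin_free_reduct)
  consider "w = w'" | "twins V E w w'" | "w \<noteq> w'" "\<not> twins V E w w'"
    by blast
  then show ?thesis
  proof cases
    case 1
    obtain U where U: "twin_reduces E (V - {w}) U" "twin_free U E"
      using reduct[of "V - {w}"] by blast
    show ?thesis
      by (rule that[OF U U[unfolded 1] graph_iso_refl])
  next
    case 2
    obtain U' where U': "twin_reduces E (V - {w'}) U'" "twin_free U' E"
      using reduct[of "V - {w'}"] by blast
    obtain U where U: "twin_reduces E (V - {w}) U" "twin_free U E" "graph_iso U E U' E"
      using assms(1) 2 U' by (rule twin_free_reduct_transfer)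
    show ?thesis
      by (rule that[OF U(1,2) U' U(3)])
  next
    case 3
    obtain T where T: "twin_reduces E (V - {w} - {w'}) T" "twin_free T E"
      using reduct[of "V - {w} - {w'}"] by blast
    have "twins (V - {w}) E v' w'"
      using assms(3) 3 by (intro twins_Diff) auto
    then have reduces_T: "twin_reduces E (V - {w}) T"
      using T(1) by (rule twin_reduces_Diff)
    have "twins (V - {w'}) E v w"
      using assms(2) 3 twins_sym[OF assms(2)] by (intro twins_Diff) auto
    moreover have "twin_reduces E (V - {w'} - {w}) T"
      using T(1) by (simp add: Diff_insert2 [symmetric] insert_commute)
    ultimately have reduces_T': "twin_reduces E (V - {w'}) T"
      by (rule twin_reduces_Diff)
    show ?thesis
      by (rule that[OF reduces_T T(2) reduces_T' T(2) graph_iso_refl])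
  qed
qed

theorem mainTheorem15:
  fixes V V1 V2 :: "'a set" and E :: "'a \<Rightarrow> 'a \<Rightarrow> bool"
  assumes "simple_graph V E"
    and "twin_reduces E V V1" and "twin_free V1 E"
    and "twin_reduces E V V2" and "twin_free V2 E"
  shows "graph_iso V1 E V2 E"
  using assms
proof (induction "card V" arbitrary: V V1 V2 rule: less_induct)
  case less
  show ?case
  proof (cases "twin_free V E")
    case True
    then have "V1 = V" "V2 = V"
      using less.prems twin_reduces_from_twin_free by blast+
    then show ?thesis
      by (simp add: graph_iso_refl)
  next
    case False
    have IH: "graph_iso A E B E"
      if "twins V E x y" "twin_reduces E (V - {y}) A" "twin_free A E"
        "twin_reduces E (V - {y}) B" "twin_free B E" for x y A B
    proof -
      have "card (V - {y}) < card V" "simple_graph (V - {y}) E"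
        using less.prems(1) card_Diff_twin_less[OF _ that(1)] simple_graph_subset
        unfolding simple_graph_def by blast+
      then show ?thesis
        using less.hyps that(2-5) by blast
    qed
    have "V1 \<noteq> V" "V2 \<noteq> V"
      using False less.prems by auto
    obtain v w where step1: "twins V E v w" "twin_reduces E (V - {w}) V1"
      by (rule twin_reduces_cases[OF less.prems(2) \<open>V1 \<noteq> V\<close>])
    obtain v' w' where step2: "twins V E v' w'" "twin_reduces E (V - {w'}) V2"
      by (rule twin_reduces_cases[OF less.prems(4) \<open>V2 \<noteq> V\<close>])
    obtain U U' where U: "twin_reduces E (V - {w}) U" "twin_free U E"
      and U': "twin_reduces E (V - {w'}) U'" "twin_free U' E" and "graph_iso U E U' E"
      using less.prems(1) step1(1) step2(1) by (rule twin_reductions_join)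
    have "graph_iso V1 E U E"
      using IH[OF step1 less.prems(3) U] .
    also have "graph_iso U E U' E" by fact
    also have "graph_iso U' E V2 E"
      using IH[OF step2(1) U' step2(2) less.prems(5)] .
    finally show ?thesis .
  qed
qed

end
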